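(* Let $Q$ be an $n\times n$ real symmetric matrix, let $\Delta_n := \{x \in \mathbb{R}^n : x \ge 0,\ \sum_{j=1}^n x_j = 1\}$, and let $\nu(Q) := \min_{x \in \Delta_n} x^TQx$. For $x \in \Delta_n$ let $\mathcal{P}(x) = \{j : x_j > 0\}$, and let $e_j$ denote the $j$-th unit vector of $\mathbb{R}^n$. Then \[ \nu(Q) = \min_{x \in \Delta_n} \max_{j \in \mathcal{P}(x)} e_j^T Q x . \] *)

theory Defs
  imports "HOL-Analysis.Analysis"
begin

definition std_simplex :: "(real ^ 'n) set" where
  "std_simplex = {x. (\<forall>j. 0 \<le> x $ j) \<and> (\<Sum>j\<in>UNIV. x $ j) = 1}"

definition supp_idx :: "real ^ 'n \<Rightarrow> 'n set" where
  "supp_idx x = {j. x $ j > 0}"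

text \<open>nu(Q) = min over the simplex of x^T Q x (the minimum exists by compactness;
  we define it as the infimum of the attained values).\<close>
definition nu :: "real ^ 'n ^ 'n \<Rightarrow> real" where
  "nu Q = Inf {x \<bullet> (Q *v x) | x. x \<in> std_simplex}"

end

theory Submission
  imports Defs
begin

text \<open>A minimiser x of f(x) = x^T Q x over the simplex satisfies the first-order condition
  (e_j - x)^T Q x \<ge> 0 at every vertex e_j, i.e. (Qx)_j \<ge> f(x) for all j. Since
  f(x) = \<Sum>_j x_j (Qx)_j is a convex combination of the (Qx)_j with j in the support,
  equality (Qx)_j = f(x) holds on the support, so the max-expression equals \<nu>(Q) at x.
  Conversely, the same convex combination bounds x^T Q x by the max-expression at every x.\<close>

lemma compact_std_simplex: "compact (std_simplex :: (real ^ 'n) set)"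
proof (subst compact_eq_bounded_closed, intro conjI)
  show "bounded (std_simplex :: (real ^ 'n) set)"
    unfolding bounded_iff
  proof (intro exI ballI)
    fix x :: "real ^ 'n" assume x: "x \<in> std_simplex"
    have "norm x \<le> (\<Sum>j\<in>UNIV. \<bar>x $ j\<bar>)" by (rule norm_le_l1_cart)
    also have "\<dots> = 1" using x by (simp add: std_simplex_def)
    finally show "norm x \<le> 1" .
  qed
  show "closed (std_simplex :: (real ^ 'n) set)"
    unfolding std_simplex_def
    by (intro closed_Collect_conj closed_Collect_all closed_Collect_le closed_Collect_eq
        continuous_intros)
qed

lemma convex_std_simplex: "convex (std_simplex :: (real ^ 'n) set)"
  unfolding convex_def std_simplex_def
  by (auto simp: sum.distrib sum_distrib_left[symmetric])

lemma axis_in_std_simplex: "axis j 1 \<in> std_simplex"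
  by (simp add: std_simplex_def axis_def)

lemma std_simplex_nonempty: "std_simplex \<noteq> {}"
  using axis_in_std_simplex by blast

lemma inner_eq_sum_supp_idx:
  assumes "x \<in> std_simplex"
  shows "x \<bullet> v = (\<Sum>j\<in>supp_idx x. x $ j * v $ j)"
proof -
  have "x \<bullet> v = (\<Sum>j\<in>UNIV. x $ j * v $ j)" by (simp add: inner_vec_def)
  also have "\<dots> = (\<Sum>j\<in>supp_idx x. x $ j * v $ j)"
    using assms by (intro sum.mono_neutral_right) (auto simp: std_simplex_def supp_idx_def
        intro: antisym)
  finally show ?thesis .
qed

lemma inner_one_std_simplex: "x \<in> std_simplex \<Longrightarrow> x \<bullet> 1 = 1"
  by (simp add: std_simplex_def inner_vec_def)

lemma supp_idx_nonempty:
  assumes "x \<in> std_simplex"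
  shows "supp_idx x \<noteq> {}"
  using inner_eq_sum_supp_idx[OF assms, of 1] inner_one_std_simplex[OF assms] by auto

lemma inner_le_Max_supp_idx:
  assumes x: "x \<in> std_simplex"
  shows "x \<bullet> v \<le> Max ((\<lambda>j. v $ j) ` supp_idx x)"
proof -
  let ?M = "Max ((\<lambda>j. v $ j) ` supp_idx x)"
  have "x \<bullet> v = (\<Sum>j\<in>supp_idx x. x $ j * v $ j)" using x by (rule inner_eq_sum_supp_idx)
  also have "\<dots> \<le> (\<Sum>j\<in>supp_idx x. x $ j * ?M)"
    by (intro sum_mono mult_left_mono) (auto simp: supp_idx_def)
  also have "\<dots> = (x \<bullet> 1) * ?M"
    using inner_eq_sum_supp_idx[OF x, of 1] by (simp add: sum_distrib_right)
  also have "x \<bullet> 1 = 1" using x by (rule inner_one_std_simplex)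
  finally show ?thesis by simp
qed

lemma Max_supp_idx_eq_inner:
  assumes x: "x \<in> std_simplex" and below: "\<And>j. x \<bullet> v \<le> v $ j"
  shows "Max ((\<lambda>j. v $ j) ` supp_idx x) = x \<bullet> v"
proof (rule antisym[OF Max.boundedI inner_le_Max_supp_idx[OF x]])
  show "finite ((\<lambda>j. v $ j) ` supp_idx x)" by simp
  show "(\<lambda>j. v $ j) ` supp_idx x \<noteq> {}" using supp_idx_nonempty[OF x] by simp
next
  fix w assume "w \<in> (\<lambda>j. v $ j) ` supp_idx x"
  then obtain i where i: "0 < x $ i" and w: "w = v $ i"
    by (auto simp: supp_idx_def)
  have nonneg: "0 \<le> x $ j * (v $ j - x \<bullet> v)" for j
    using x below[of j] by (simp add: std_simplex_def)
  have "(\<Sum>j\<in>UNIV. x $ j * (v $ j - x \<bullet> v)) = x \<bullet> v - (\<Sum>j\<in>UNIV. x $ j) * (x \<bullet> v)"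
    by (simp add: inner_vec_def algebra_simps sum_subtractf sum_distrib_right)
  also have "\<dots> = 0" using x by (simp add: std_simplex_def)
  finally have "x $ i * (v $ i - x \<bullet> v) = 0"
    using nonneg by (simp add: sum_nonneg_eq_0_iff)
  with i w show "w \<le> x \<bullet> v" by simp
qed

lemma quadratic_form_add_scaleR:
  fixes Q :: "real ^ 'n ^ 'n"
  assumes "transpose Q = Q"
  shows "(x + t *\<^sub>R d) \<bullet> (Q *v (x + t *\<^sub>R d)) =
     x \<bullet> (Q *v x) + 2 * t * (d \<bullet> (Q *v x)) + t\<^sup>2 * (d \<bullet> (Q *v d))"
proof -
  have "x \<bullet> (Q *v d) = (x v* Q) \<bullet> d" by (simp add: dot_lmul_matrix)
  also have "x v* Q = transpose Q *v x" by simp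
  finally have "x \<bullet> (Q *v d) = d \<bullet> (Q *v x)" using assms by (simp add: inner_commute)
  then show ?thesis
    by (simp add: matrix_vector_right_distrib matrix_vector_mult_scaleR inner_add_left
        inner_add_right power2_eq_square algebra_simps)
qed

lemma quadratic_form_min_variational_inequality:
  fixes Q :: "real ^ 'n ^ 'n"
  assumes "transpose Q = Q" and "convex S" and "x \<in> S" and "y \<in> S"
    and min: "\<And>z. z \<in> S \<Longrightarrow> x \<bullet> (Q *v x) \<le> z \<bullet> (Q *v z)"
  shows "0 \<le> (y - x) \<bullet> (Q *v x)"
proof -
  define d where "d = y - x"
  have "0 \<le> 2 * (d \<bullet> (Q *v x)) + t * (d \<bullet> (Q *v d))" if t: "0 < t" "t < 1" for t
  proof -
    have "x + t *\<^sub>R d = (1 - t) *\<^sub>R x + t *\<^sub>R y" by (simp add: d_def algebra_simps)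
    then have "x + t *\<^sub>R d \<in> S" using assms(2-4) t by (simp add: convex_def)
    then have "0 \<le> t * (2 * (d \<bullet> (Q *v x)) + t * (d \<bullet> (Q *v d)))"
      using min quadratic_form_add_scaleR[OF assms(1), of x t d]
      by (force simp: power2_eq_square algebra_simps)
    with t show ?thesis by (simp add: zero_le_mult_iff)
  qed
  then have "\<forall>\<^sub>F t in at_right 0. 0 \<le> 2 * (d \<bullet> (Q *v x)) + t * (d \<bullet> (Q *v d))"
    by (auto simp: eventually_at_right_field intro!: exI[of _ 1])
  moreover have "((\<lambda>t. 2 * (d \<bullet> (Q *v x)) + t * (d \<bullet> (Q *v d)))
      \<longlongrightarrow> 2 * (d \<bullet> (Q *v x))) (at_right 0)"
    by (auto intro!: tendsto_eq_intros)
  ultimately have "0 \<le> 2 * (d \<bullet> (Q *v x))"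
    by (intro tendsto_lowerbound) auto
  then show ?thesis by (simp add: d_def)
qed

theorem proposition1:
  fixes Q :: "real ^ 'n ^ 'n"
  assumes "transpose Q = Q"
  defines "S \<equiv> {Max ((\<lambda>j. axis j 1 \<bullet> (Q *v x)) ` supp_idx x) | x. x \<in> std_simplex}"
  shows "nu Q \<in> S \<and> (\<forall>y\<in>S. nu Q \<le> y)"
proof -
  have "continuous_on std_simplex (\<lambda>x::real ^ 'n. x \<bullet> (Q *v x))" by (intro continuous_intros)
  then obtain x where x: "x \<in> std_simplex"
    and min: "\<And>z. z \<in> std_simplex \<Longrightarrow> x \<bullet> (Q *v x) \<le> z \<bullet> (Q *v z)"
    using continuous_attains_inf[OF compact_std_simplex std_simplex_nonempty] by blast
  have nu: "nu Q = x \<bullet> (Q *v x)"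
    unfolding nu_def by (rule cInf_eq_minimum) (use x min in auto)
  have "x \<bullet> (Q *v x) \<le> (Q *v x) $ j" for j
    using quadratic_form_min_variational_inequality[OF assms(1) convex_std_simplex x
        axis_in_std_simplex min]
    by (simp add: inner_diff_left inner_axis')
  then have "nu Q = Max ((\<lambda>j. axis j 1 \<bullet> (Q *v x)) ` supp_idx x)"
    using Max_supp_idx_eq_inner[OF x] nu by (simp add: inner_axis')
  with x have "nu Q \<in> S" unfolding S_def by blast
  moreover have "nu Q \<le> Max ((\<lambda>j. axis j 1 \<bullet> (Q *v z)) ` supp_idx z)" if "z \<in> std_simplex" for z
    using nu min[OF that] inner_le_Max_supp_idx[OF that, of "Q *v z"] by (simp add: inner_axis')
  ultimately show ?thesis unfolding S_def by blast
qed

end
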